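(* Let $f_0:\mathbb{R}^d\to[0,\infty)$ be a uniformly continuous probability density. For $\eta>0$ define $h(\eta)=\max\{h\ge0:\sup_{x,y\in\mathbb{R}^d,\|x-y\|\le h}|f_0(x)-f_0(y)|\le\eta\}$. Then $h(\eta)>0$ for every $\eta>0$. Moreover, if $\mathcal{X}_n=\{x_1,\dots,x_n\}$ are drawn independently from $f_0$ with $n\ge16$, then with probability at least $1-1/n$, $$S_{\lambda+\|f_0-f\|_\infty+\eta}\subseteq \hat S_{\delta,\lambda}(f)\subseteq S_{\lambda-\|f_0-f\|_\infty-\eta}$$ holds simultaneously for all functions $f:\mathbb{R}^d\to\mathbb{R}$ and all constants $\eta,\lambda>0$ and $\delta$ such that $\delta\in[r_{n,\lambda,d},2h(\eta)]$, where $r_{n,\lambda,d}=2\big(\frac{16\,d\ln n}{\lambda v_d n}\big)^{1/d}$.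
   Context: $S_t=\{x\in\mathbb{R}^d:f_0(x)\ge t\}$. For a function $f$, $\hat S_{\delta,\lambda}(f)=\bigcup_{x\in A_{f,\lambda}}B(x,\delta/2)$, where $A_{f,\lambda}=\{x\in\mathcal{X}_n:f(x)\ge\lambda\}$ and $B(x,r)$ is the open Euclidean ball of radius $r$ around $x$. $v_d$ is the volume of the unit Euclidean ball in $\mathbb{R}^d$. *)

theory Defs
  imports "HOL-Probability.Probability"
begin

definition superlevel :: "('a \<Rightarrow> real) \<Rightarrow> ereal \<Rightarrow> 'a set" where
  "superlevel f0 t = {x. t \<le> ereal (f0 x)}"

definition supdist :: "('a \<Rightarrow> real) \<Rightarrow> ('a \<Rightarrow> real) \<Rightarrow> ereal" where
  "supdist f0 f = (SUP x. ereal \<bar>f0 x - f x\<bar>)"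

text \<open>h(eta): the largest h >= 0 with sup over dist x y <= h of |f0 x - f0 y| <= eta
  (as an extended real; it is infinite if every h qualifies).\<close>
definition modh :: "('a::metric_space \<Rightarrow> real) \<Rightarrow> real \<Rightarrow> ereal" where
  "modh f0 \<eta> = Sup {ereal h | h. h \<ge> 0 \<and>
      (\<forall>x y. dist x y \<le> h \<longrightarrow> \<bar>f0 x - f0 y\<bar> \<le> \<eta>)}"

definition Shat :: "nat \<Rightarrow> (nat \<Rightarrow> 'a::metric_space) \<Rightarrow> real \<Rightarrow> real \<Rightarrow> ('a \<Rightarrow> real) \<Rightarrow> 'a set" where
  "Shat n X \<delta> lam f = (\<Union>i\<in>{i. i < n \<and> f (X i) \<ge> lam}. ball (X i) (\<delta>/2))"

definition unit_ball_vol :: "'a::euclidean_space itself \<Rightarrow> real" where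
  "unit_ball_vol _ = measure lborel (ball (0::'a) 1)"

definition rnld :: "'a::euclidean_space itself \<Rightarrow> nat \<Rightarrow> real \<Rightarrow> real" where
  "rnld T n lam = 2 * ((16 * real DIM('a) * ln (real n)) / (lam * unit_ball_vol T * real n))
                    powr (1 / real DIM('a))"

end

theory Submission
  imports Defs
begin

text \<open>
  The inclusion of \<open>Shat\<close> in the lower level set is deterministic: a sample point with
  \<open>f(x_i) \<ge> lam\<close> has \<open>f0(x_i) \<ge> lam - supdist f0 f\<close>, and \<open>f0\<close> moves by at most \<open>\<eta>\<close> on balls of radius
  \<open>\<delta>/2 \<le> h(\<eta>)\<close>. The other inclusion holds as soon as the sample meets every ball \<open>B(x, \<delta>/2)\<close>
  on which \<open>f0 \<ge> lam\<close>. To make this a single event, uniform in \<open>lam\<close> and \<open>x\<close>, discretise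
  \<open>lam\<close> dyadically: at level \<open>2^k\<close> fix a maximal separated net and keep the net balls on which
  \<open>f0 \<ge> 2^k\<close>; every ball \<open>B(x, \<delta>/2)\<close> as above contains a kept ball. Each kept ball has
  probability at least \<open>6 d ln n / n\<close>, so the sample misses it with probability at most
  \<open>n^(-6d)\<close>. Within one level the concentric balls of half the separation are disjoint and
  carry density at least \<open>2^k\<close>; as a sum of distinct powers of two is at most twice the
  largest, \<open>\<integral> f0 = 1\<close> bounds the number of kept balls by a polynomial in \<open>n\<close>, and a union
  bound leaves failure probability at most \<open>1/n\<close>.
\<close>

section \<open>Modulus of continuity and the two inclusions\<close>

lemma modh_gt_0:
  fixes f :: "'a::metric_space \<Rightarrow> real"
  assumes "uniformly_continuous_on UNIV f" and "0 < \<eta>"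
  shows "0 < modh f \<eta>"
proof -
  obtain e where "0 < e" and e: "\<And>x y. dist y x < e \<Longrightarrow> dist (f y) (f x) < \<eta>"
    using assms unfolding uniformly_continuous_on_def by blast
  have "\<bar>f x - f y\<bar> \<le> \<eta>" if "dist x y \<le> e / 2" for x y
    using e[of x y] that \<open>0 < e\<close> by (simp add: dist_real_def)
  then have "ereal (e / 2) \<le> modh f \<eta>"
    unfolding modh_def using \<open>0 < e\<close> by (intro Sup_upper CollectI exI[of _ "e / 2"]) auto
  then show ?thesis using \<open>0 < e\<close> by (simp add: less_le_trans[of 0 "ereal (e / 2)"])
qed

lemma abs_diff_le_if_dist_lt_modh:
  fixes f :: "'a::metric_space \<Rightarrow> real"
  assumes "ereal \<delta> \<le> 2 * modh f \<eta>" and "dist x y < \<delta> / 2"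
  shows "\<bar>f x - f y\<bar> \<le> \<eta>"
proof -
  have "ereal (dist x y) < ereal (\<delta> / 2)"
    using assms(2) by simp
  also have "\<dots> \<le> modh f \<eta>"
    using assms(1) by (cases "modh f \<eta>") auto
  finally have "ereal (dist x y) < modh f \<eta>" .
  then obtain h where "\<forall>x y. dist x y \<le> h \<longrightarrow> \<bar>f x - f y\<bar> \<le> \<eta>" and "dist x y < h"
    unfolding modh_def by (auto simp: less_Sup_iff)
  then show ?thesis by auto
qed

lemma abs_diff_le_supdist: "ereal \<bar>f0 x - f x\<bar> \<le> supdist f0 f"
  unfolding supdist_def by (rule SUP_upper) simp

lemma superlevel_subset_Shat:
  fixes f0 f :: "'a::metric_space \<Rightarrow> real"
  assumes close: "ereal \<delta> \<le> 2 * modh f0 \<eta>"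
    and hit: "\<And>x. \<forall>z\<in>ball x (\<delta> / 2). lam \<le> f0 z \<Longrightarrow> \<exists>i<n. X i \<in> ball x (\<delta> / 2)"
  shows "superlevel f0 (ereal lam + supdist f0 f + ereal \<eta>) \<subseteq> Shat n X \<delta> lam f"
proof
  fix x assume "x \<in> superlevel f0 (ereal lam + supdist f0 f + ereal \<eta>)"
  then have x: "ereal lam + supdist f0 f + ereal \<eta> \<le> ereal (f0 x)"
    by (simp add: superlevel_def)
  obtain e where e: "supdist f0 f = ereal e" and "0 \<le> e"
  proof (cases "supdist f0 f")
    case (real e)
    then show thesis using that abs_diff_le_supdist[of f0 x f] by force
  qed (use x abs_diff_le_supdist[of f0 x f] in auto)
  have near: "lam + e \<le> f0 z" if "z \<in> ball x (\<delta> / 2)" for z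
    using abs_diff_le_if_dist_lt_modh[OF close, of x z] that x e by auto
  then obtain i where "i < n" and i: "X i \<in> ball x (\<delta> / 2)"
    using hit[of x] \<open>0 \<le> e\<close> by force
  have "lam \<le> f (X i)"
    using near[OF i] abs_diff_le_supdist[of f0 "X i" f] e by auto
  with \<open>i < n\<close> i show "x \<in> Shat n X \<delta> lam f"
    unfolding Shat_def by (auto simp: dist_commute)
qed

lemma Shat_subset_superlevel:
  fixes f0 f :: "'a::metric_space \<Rightarrow> real"
  assumes close: "ereal \<delta> \<le> 2 * modh f0 \<eta>"
  shows "Shat n X \<delta> lam f \<subseteq> superlevel f0 (ereal lam - supdist f0 f - ereal \<eta>)"
proof
  fix x assume "x \<in> Shat n X \<delta> lam f"
  then obtain i where "lam \<le> f (X i)" and "dist (X i) x < \<delta> / 2"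
    by (auto simp: Shat_def)
  then have "lam - \<bar>f0 (X i) - f (X i)\<bar> - \<eta> \<le> f0 x"
    using abs_diff_le_if_dist_lt_modh[OF close, of "X i" x] abs_ge_self[of "f0 (X i) - f0 x"]
      abs_ge_minus_self[of "f0 (X i) - f (X i)"] by linarith
  then have "ereal lam - supdist f0 f - ereal \<eta> \<le> ereal (f0 x)"
    using abs_diff_le_supdist[of f0 "X i" f] by (cases "supdist f0 f") auto
  then show "x \<in> superlevel f0 (ereal lam - supdist f0 f - ereal \<eta>)"
    by (simp add: superlevel_def)
qed

lemma superlevel_Shat_sandwich:
  fixes f0 f :: "'a::euclidean_space \<Rightarrow> real"
  assumes "0 < lam" and "rnld TYPE('a) n lam \<le> \<delta>" and close: "ereal \<delta> \<le> 2 * modh f0 \<eta>"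
    and hits: "\<forall>lam \<rho> x. 0 < lam \<longrightarrow> rnld TYPE('a) n lam / 2 \<le> \<rho> \<longrightarrow>
                 (\<forall>z\<in>ball x \<rho>. lam \<le> f0 z) \<longrightarrow> (\<exists>i<n. X i \<in> ball x \<rho>)"
  shows "superlevel f0 (ereal lam + supdist f0 f + ereal \<eta>) \<subseteq> Shat n X \<delta> lam f \<and>
         Shat n X \<delta> lam f \<subseteq> superlevel f0 (ereal lam - supdist f0 f - ereal \<eta>)"
proof
  show "superlevel f0 (ereal lam + supdist f0 f + ereal \<eta>) \<subseteq> Shat n X \<delta> lam f"
  proof (rule superlevel_subset_Shat[OF close])
    show "\<exists>i<n. X i \<in> ball x (\<delta> / 2)" if "\<forall>z\<in>ball x (\<delta> / 2). lam \<le> f0 z" for x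
      using hits[rule_format, of lam "\<delta> / 2" x] that assms(1,2) by simp
  qed
  show "Shat n X \<delta> lam f \<subseteq> superlevel f0 (ereal lam - supdist f0 f - ereal \<eta>)"
    using close by (rule Shat_subset_superlevel)
qed

lemma unit_ball_vol_eq:
  "Defs.unit_ball_vol TYPE('a::euclidean_space) = Ball_Volume.unit_ball_vol (real DIM('a))"
  using content_ball[of 1 "0::'a"] by (simp add: Defs.unit_ball_vol_def)

lemma unit_ball_vol_pos: "0 < Defs.unit_ball_vol TYPE('a::euclidean_space)"
  by (simp add: unit_ball_vol_eq)

lemma measure_lborel_ball:
  fixes y :: "'a::euclidean_space"
  assumes "0 \<le> r"
  shows "measure lborel (ball y r) = Defs.unit_ball_vol TYPE('a) * r ^ DIM('a)"
  using content_ball[OF assms, of y] by (simp add: unit_ball_vol_eq)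

lemma rnld_pos:
  assumes "0 < lam" and "2 \<le> n"
  shows "0 < rnld TYPE('a::euclidean_space) n lam"
  using assms unit_ball_vol_pos[where 'a = 'a] by (simp add: rnld_def)

lemma rnld_pow:
  assumes "0 < lam" and "2 \<le> n"
  shows "lam * Defs.unit_ball_vol TYPE('a::euclidean_space) * (rnld TYPE('a) n lam / 2) ^ DIM('a)
           = 16 * real DIM('a) * ln n / n"
proof -
  define b where "b = 16 * real DIM('a) * ln n / (lam * Defs.unit_ball_vol TYPE('a) * n)"
  have "0 < b"
    using assms unit_ball_vol_pos[where 'a = 'a] by (simp add: b_def)
  then have "(rnld TYPE('a) n lam / 2) ^ DIM('a) = b"
    by (simp add: rnld_def b_def[symmetric] powr_realpow[symmetric] powr_powr)
  then show ?thesis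
    using assms unit_ball_vol_pos[where 'a = 'a] by (simp add: b_def)
qed

lemma rnld_antimono:
  assumes "0 < lam" and "lam \<le> mu" and "1 \<le> n"
  shows "rnld TYPE('a::euclidean_space) n mu \<le> rnld TYPE('a) n lam"
  unfolding rnld_def using assms
  by (intro mult_left_mono powr_mono2 divide_left_mono mult_right_mono mult_pos_pos)
    (use unit_ball_vol_pos[where 'a = 'a] in auto)

text \<open>Every \<open>lam\<close> in \<open>[2^k, 2^(k+1))\<close> has \<open>rnld TYPE('a) n lam / 2 \<ge> level_radius TYPE('a) n k\<close>,
  so a single level serves a whole dyadic range of levels \<open>lam\<close>.\<close>

definition level_radius :: "'a::euclidean_space itself \<Rightarrow> nat \<Rightarrow> int \<Rightarrow> real" where
  "level_radius T n k = rnld T n (2 * 2 powr real_of_int k) / 2"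

section \<open>Dyadic nets\<close>

lemma exists_separated_net:
  fixes s :: real
  assumes "s > 0"
  obtains S :: "'a::metric_space set"
  where "pairwise (\<lambda>y y'. s \<le> dist y y') S" and "\<And>x. \<exists>y\<in>S. dist x y < s"
proof -
  define A where "A = {S::'a set. pairwise (\<lambda>y y'. s \<le> dist y y') S}"
  have "\<Union>C \<in> A" if "C \<in> chains A" for C
  proof -
    have "C \<subseteq> A" and "chain\<^sub>\<subseteq> C" using that by (auto simp: chains_def)
    then show ?thesis unfolding A_def by (intro CollectI pairwise_chain_Union) auto
  qed
  then obtain S where "S \<in> A" and maximal: "\<And>X. X \<in> A \<Longrightarrow> S \<subseteq> X \<Longrightarrow> X = S"
    using Zorn_Lemma[of A] by blast
  have "\<exists>y\<in>S. dist x y < s" for x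
  proof (rule ccontr)
    assume far: "\<not> (\<exists>y\<in>S. dist x y < s)"
    then have "insert x S \<in> A"
      using \<open>S \<in> A\<close> unfolding A_def by (simp add: pairwise_insert not_less dist_commute)
    then have "x \<in> S" using maximal by blast
    then show False using far \<open>s > 0\<close> by auto
  qed
  then show thesis using that \<open>S \<in> A\<close> unfolding A_def by blast
qed

lemma dyadic_net_hits_ball:
  fixes X :: "nat \<Rightarrow> 'a::metric_space" and S :: "int \<Rightarrow> 'a set" and r s t :: "int \<Rightarrow> real"
  assumes cover: "\<And>k x. \<exists>y\<in>S k. dist x y < s k"
    and st: "\<And>k. s k + t k \<le> r k"
    and hit: "\<And>k y. y \<in> S k \<Longrightarrow> \<forall>z\<in>ball y (t k). 2 powr k \<le> f z \<Longrightarrow> \<exists>i<n. X i \<in> ball y (t k)"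
    and "0 < lam" and r: "\<And>k. lam < 2 powr real_of_int (k + 1) \<Longrightarrow> r k \<le> \<rho>"
    and above: "\<forall>z\<in>ball x \<rho>. lam \<le> f z"
  shows "\<exists>i<n. X i \<in> ball x \<rho>"
proof -
  define k where "k = \<lfloor>log 2 lam\<rfloor>"
  have "2 powr k \<le> lam" and "lam < 2 powr real_of_int (k + 1)"
    using floor_log_eq_powr_iff[of lam 2 k] \<open>0 < lam\<close> by (simp_all add: k_def)
  obtain y where "y \<in> S k" and "dist x y < s k"
    using cover by blast
  have sub: "ball y (t k) \<subseteq> ball x \<rho>"
  proof
    fix z assume "z \<in> ball y (t k)"
    then have "dist x z < s k + t k"
      using \<open>dist x y < s k\<close> dist_triangle[of x z y] by simp
    then show "z \<in> ball x \<rho>"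
      using st[of k] r[OF \<open>lam < _\<close>] by simp
  qed
  then have "\<forall>z\<in>ball y (t k). 2 powr k \<le> f z"
    using above \<open>2 powr k \<le> lam\<close> by force
  then obtain i where "i < n" and "X i \<in> ball y (t k)"
    using hit \<open>y \<in> S k\<close> by blast
  then show ?thesis using sub by blast
qed

lemma sum_dyadic_le:
  fixes K :: "int set"
  assumes "finite K" and "0 \<le> v" and le: "\<And>k. k \<in> K \<Longrightarrow> 2 powr k \<le> v"
  shows "(\<Sum>k\<in>K. 2 powr k / 2) \<le> v"
proof (cases "K = {}")
  case True
  then show ?thesis using \<open>0 \<le> v\<close> by simp
next
  case False
  define m where "m = Max K"
  have "m \<in> K" and below: "\<And>k. k \<in> K \<Longrightarrow> k \<le> m"
    using \<open>finite K\<close> False by (auto simp: m_def)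
  have shift: "2 powr k / 2 = 2 powr m / 2 * (1/2) ^ nat (m - k)" if "k \<in> K" for k
  proof -
    have "2 powr m = 2 powr k * 2 ^ nat (m - k)"
      using below[OF that] by (simp add: powr_realpow[symmetric] powr_add[symmetric])
    then show ?thesis by (simp add: power_one_over)
  qed
  have inj: "inj_on (\<lambda>k. nat (m - k)) K"
  proof (rule inj_onI)
    fix a b assume "a \<in> K" "b \<in> K" "nat (m - a) = nat (m - b)"
    with below[of a] below[of b] show "a = b" by simp
  qed
  have "(\<Sum>k\<in>K. 2 powr k / 2) = (\<Sum>k\<in>K. 2 powr m / 2 * (1/2::real) ^ nat (m - k))"
    by (rule sum.cong[OF refl shift])
  also have "\<dots> = 2 powr m / 2 * (\<Sum>k\<in>K. (1/2::real) ^ nat (m - k))"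
    by (rule sum_distrib_left[symmetric])
  also have "(\<Sum>k\<in>K. (1/2::real) ^ nat (m - k)) = (\<Sum>j\<in>(\<lambda>k. nat (m - k)) ` K. (1/2) ^ j)"
    by (simp add: sum.reindex[OF inj])
  also have "\<dots> \<le> (\<Sum>j. (1/2) ^ j)"
    using \<open>finite K\<close> by (intro sum_le_suminf summable_geometric) auto
  also have "(\<Sum>j. (1/2::real) ^ j) = 2"
    using suminf_geometric[of "1/2::real"] by simp
  finally show ?thesis using le[OF \<open>m \<in> K\<close>] by simp
qed

lemma sum_dyadic_indicator_le:
  fixes G :: "(int \<times> 'a::metric_space) set" and s :: "int \<Rightarrow> real"
  assumes "finite G" and "0 \<le> f z"
    and sep: "\<And>k y y'. (k, y) \<in> G \<Longrightarrow> (k, y') \<in> G \<Longrightarrow> y \<noteq> y' \<Longrightarrow> s k \<le> dist y y'"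
    and big: "\<And>k y. (k, y) \<in> G \<Longrightarrow> dist y z < s k / 2 \<Longrightarrow> 2 powr k \<le> f z"
  shows "(\<Sum>(k, y)\<in>G. 2 powr k / 2 * indicator (ball y (s k / 2)) z) \<le> f z"
proof -
  define Gz where "Gz = {(k, y) \<in> G. dist y z < s k / 2}"
  have "finite Gz"
    unfolding Gz_def using \<open>finite G\<close> by (rule rev_finite_subset) auto
  have "inj_on fst Gz"
  proof (rule inj_onI)
    fix p q assume "p \<in> Gz" "q \<in> Gz" "fst p = fst q"
    then obtain k y y' where pq: "p = (k, y)" "q = (k, y')" by (metis prod.collapse)
    then have "dist y y' < s k" and "(k, y) \<in> G" "(k, y') \<in> G"
      using \<open>p \<in> Gz\<close> \<open>q \<in> Gz\<close> dist_triangle_half_r[of z y "s k" y']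
      by (auto simp: Gz_def dist_commute)
    then show "p = q" using sep pq by fastforce
  qed
  have "(\<Sum>(k, y)\<in>G. 2 powr k / 2 * indicator (ball y (s k / 2)) z) = (\<Sum>(k, y)\<in>Gz. 2 powr k / 2)"
    using \<open>finite G\<close> unfolding Gz_def
    by (intro sum.mono_neutral_cong_right) (auto simp: indicator_def dist_commute)
  also have "\<dots> = (\<Sum>k\<in>fst ` Gz. 2 powr k / 2)"
    using \<open>inj_on fst Gz\<close> by (simp add: sum.reindex case_prod_beta)
  also have "\<dots> \<le> f z"
    using \<open>0 \<le> f z\<close> big
    by (intro sum_dyadic_le finite_imageI \<open>finite Gz\<close>) (auto simp: Gz_def)
  finally show ?thesis .
qed

lemma nn_integral_mult_indicator_ball:
  fixes y :: "'a::euclidean_space"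
  assumes "0 \<le> a"
  shows "(\<integral>\<^sup>+ z. ennreal (a * indicator (ball y r) z) \<partial>lborel) = ennreal (a * measure lborel (ball y r))"
proof -
  have "(\<integral>\<^sup>+ z. ennreal (a * indicator (ball y r) z) \<partial>lborel)
      = (\<integral>\<^sup>+ z. ennreal a * indicator (ball y r) z \<partial>lborel)"
    by (intro nn_integral_cong) (simp add: indicator_def)
  also have "\<dots> = ennreal a * emeasure lborel (ball y r)"
    by (simp add: nn_integral_cmult_indicator)
  also have "\<dots> = ennreal a * ennreal (measure lborel (ball y r))"
    using emeasure_lborel_ball_finite[of y r] by (subst emeasure_eq_ennreal_measure) auto
  also have "\<dots> = ennreal (a * measure lborel (ball y r))"
    by (rule ennreal_mult[symmetric]) (use assms in auto)
  finally show ?thesis .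
qed

lemma dyadic_packing_card_le:
  fixes f :: "'a::euclidean_space \<Rightarrow> real" and G :: "(int \<times> 'a) set" and s :: "int \<Rightarrow> real"
  assumes nonneg: "\<And>x. 0 \<le> f x" and mass: "(\<integral>\<^sup>+ x. ennreal (f x) \<partial>lborel) \<le> 1"
    and "finite G"
    and sep: "\<And>k y y'. (k, y) \<in> G \<Longrightarrow> (k, y') \<in> G \<Longrightarrow> y \<noteq> y' \<Longrightarrow> s k \<le> dist y y'"
    and big: "\<And>k y z. (k, y) \<in> G \<Longrightarrow> dist y z < s k / 2 \<Longrightarrow> 2 powr k \<le> f z"
    and vol: "\<And>k y. (k, y) \<in> G \<Longrightarrow> c \<le> 2 powr k / 2 * measure lborel (ball y (s k / 2))"
  shows "real (card G) * c \<le> 1"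
proof -
  define g where
    "g p z = 2 powr real_of_int (fst p) / 2 * indicator (ball (snd p) (s (fst p) / 2)) z"
    for p :: "int \<times> 'a" and z :: 'a
  define w where
    "w p = 2 powr real_of_int (fst p) / 2 * measure lborel (ball (snd p) (s (fst p) / 2))"
    for p :: "int \<times> 'a"
  have integral: "(\<integral>\<^sup>+ z. ennreal (g p z) \<partial>lborel) = ennreal (w p)" for p
    unfolding g_def w_def by (rule nn_integral_mult_indicator_ball) simp
  have pointwise: "(\<Sum>p\<in>G. g p z) \<le> f z" for z
    using sum_dyadic_indicator_le[OF \<open>finite G\<close> nonneg sep big]
    by (simp add: g_def case_prod_beta)
  have "ennreal (\<Sum>p\<in>G. w p) = (\<Sum>p\<in>G. ennreal (w p))"
    by (rule sum_ennreal[symmetric]) (simp add: w_def)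
  also have "\<dots> = (\<Sum>p\<in>G. \<integral>\<^sup>+ z. ennreal (g p z) \<partial>lborel)"
    by (simp only: integral)
  also have "\<dots> = (\<integral>\<^sup>+ z. (\<Sum>p\<in>G. ennreal (g p z)) \<partial>lborel)"
    unfolding g_def by (intro nn_integral_sum[symmetric] borel_measurable_times borel_measurable_indicator
        measurable_compose[OF _ measurable_ennreal]) auto
  also have "\<dots> \<le> (\<integral>\<^sup>+ z. ennreal (f z) \<partial>lborel)"
  proof (rule nn_integral_mono)
    fix z
    have "(\<Sum>p\<in>G. ennreal (g p z)) = ennreal (\<Sum>p\<in>G. g p z)"
      by (rule sum_ennreal) (simp add: g_def)
    also have "\<dots> \<le> ennreal (f z)"
      using pointwise by (rule ennreal_leI)
    finally show "(\<Sum>p\<in>G. ennreal (g p z)) \<le> ennreal (f z)" .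
  qed
  also have "\<dots> \<le> 1" by (rule mass)
  finally have "(\<Sum>p\<in>G. w p) \<le> 1" by simp
  moreover have "real (card G) * c \<le> (\<Sum>p\<in>G. w p)"
    using vol by (intro sum_bounded_below) (auto simp: w_def)
  ultimately show ?thesis by linarith
qed

lemma dyadic_packing_finite:
  fixes f :: "'a::euclidean_space \<Rightarrow> real" and F :: "(int \<times> 'a) set" and s :: "int \<Rightarrow> real"
  assumes nonneg: "\<And>x. 0 \<le> f x" and mass: "(\<integral>\<^sup>+ x. ennreal (f x) \<partial>lborel) \<le> 1"
    and sep: "\<And>k y y'. (k, y) \<in> F \<Longrightarrow> (k, y') \<in> F \<Longrightarrow> y \<noteq> y' \<Longrightarrow> s k \<le> dist y y'"
    and big: "\<And>k y z. (k, y) \<in> F \<Longrightarrow> dist y z < s k / 2 \<Longrightarrow> 2 powr k \<le> f z"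
    and vol: "\<And>k y. (k, y) \<in> F \<Longrightarrow> c \<le> 2 powr k / 2 * measure lborel (ball y (s k / 2))"
    and "0 < c"
  shows "finite F" and "real (card F) * c \<le> 1"
proof -
  have "card G \<le> nat \<lfloor>1 / c\<rfloor>" if "G \<subseteq> F" "finite G" for G
  proof -
    have "real (card G) * c \<le> 1"
    proof (rule dyadic_packing_card_le[OF nonneg mass \<open>finite G\<close>])
      show "s k \<le> dist y y'" if "(k, y) \<in> G" "(k, y') \<in> G" "y \<noteq> y'" for k y y'
        using that \<open>G \<subseteq> F\<close> sep by blast
      show "2 powr k \<le> f z" if "(k, y) \<in> G" "dist y z < s k / 2" for k y z
        using that \<open>G \<subseteq> F\<close> big by blast
      show "c \<le> 2 powr k / 2 * measure lborel (ball y (s k / 2))" if "(k, y) \<in> G" for k y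
        using that \<open>G \<subseteq> F\<close> vol by blast
    qed
    then have "real (card G) \<le> 1 / c"
      using \<open>0 < c\<close> by (simp add: pos_le_divide_eq)
    then show ?thesis by (simp add: le_nat_floor)
  qed
  then have fin: "finite F" and card: "card F \<le> nat \<lfloor>1 / c\<rfloor>"
    using finite_if_finite_subsets_card_bdd by blast+
  have "real (card F) \<le> 1 / c"
  proof -
    have "real (card F) \<le> real (nat \<lfloor>1 / c\<rfloor>)" using card by simp
    also have "\<dots> = of_int \<lfloor>1 / c\<rfloor>" using \<open>0 < c\<close> by simp
    also have "\<dots> \<le> 1 / c" by (rule of_int_floor_le)
    finally show ?thesis .
  qed
  then show "finite F" and "real (card F) * c \<le> 1"
    using fin \<open>0 < c\<close> by (simp_all add: pos_le_divide_eq)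
qed

lemma dyadic_superlevel_net_count:
  fixes f :: "'a::euclidean_space \<Rightarrow> real" and S :: "int \<Rightarrow> 'a set" and n :: nat
  defines "F \<equiv> {(k, y). y \<in> S k \<and> (\<forall>z\<in>ball y ((1 - 1 / (4 * real DIM('a))) * level_radius TYPE('a) n k).
                 2 powr real_of_int k \<le> f z)}"
  assumes nonneg: "\<And>x. 0 \<le> f x" and mass: "(\<integral>\<^sup>+ x. ennreal (f x) \<partial>lborel) \<le> 1" and "2 \<le> n"
    and sep: "\<And>k. pairwise (\<lambda>y y'. level_radius TYPE('a) n k / (4 * real DIM('a)) \<le> dist y y') (S k)"
  shows "finite F" and "real (card F) * (16 * DIM('a) * ln n / n) \<le> 4 * (8 * real DIM('a)) ^ DIM('a)"
proof -
  define d where "d = DIM('a)"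
  define r where "r = level_radius TYPE('a) n"
  define s where "s k = r k / (4 * real d)" for k
  define T where "T = 16 * d * ln n / n"
  have "1 \<le> d" by (simp add: d_def DIM_positive Suc_le_eq)
  have "0 < r k" for k
    using rnld_pos[of "2 * 2 powr k" n] \<open>2 \<le> n\<close> by (simp add: r_def level_radius_def)
  then have "0 < s k" and "s k / 2 \<le> (1 - 1 / (4 * real d)) * r k" for k
    using \<open>1 \<le> d\<close> by (auto simp: s_def field_simps)
  have vol: "2 powr k / 2 * measure lborel (ball y (s k / 2)) = T / (4 * (8 * real d) ^ d)"
    for k and y :: 'a
  proof -
    have "s k / 2 = r k / (8 * real d)" by (simp add: s_def)
    then have "measure lborel (ball y (s k / 2)) = Defs.unit_ball_vol TYPE('a) * r k ^ d / (8 * real d) ^ d"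
      using measure_lborel_ball[of "s k / 2" y] \<open>0 < s k\<close> by (simp add: d_def power_divide)
    moreover have T_eq: "2 * 2 powr k * Defs.unit_ball_vol TYPE('a) * r k ^ d = T"
      using rnld_pow[of "2 * 2 powr k" n, where 'a = 'a] \<open>2 \<le> n\<close>
      by (simp add: r_def level_radius_def T_def d_def)
    ultimately show ?thesis unfolding T_eq[symmetric] by (simp add: field_simps)
  qed
  have "0 < T / (4 * (8 * real d) ^ d)"
    using \<open>1 \<le> d\<close> \<open>2 \<le> n\<close> by (simp add: T_def)
  have packing_sep: "s k \<le> dist y y'" if "(k, y) \<in> F" "(k, y') \<in> F" "y \<noteq> y'" for k y y'
    using that sep[of k] by (auto simp: F_def s_def r_def d_def pairwise_def)
  have packing_big: "2 powr k \<le> f z" if "(k, y) \<in> F" "dist y z < s k / 2" for k y z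
    using that \<open>s k / 2 \<le> (1 - 1 / (4 * real d)) * r k\<close> by (auto simp: F_def r_def d_def)
  have packing_vol: "T / (4 * (8 * real d) ^ d) \<le> 2 powr k / 2 * measure lborel (ball y (s k / 2))"
    if "(k, y) \<in> F" for k y
    using vol[of k y] by (rule eq_refl[OF sym])
  have "finite F" and "real (card F) * (T / (4 * (8 * real d) ^ d)) \<le> 1"
    using dyadic_packing_finite[OF nonneg mass packing_sep packing_big packing_vol
        \<open>0 < T / (4 * (8 * real d) ^ d)\<close>] by simp_all
  then show "finite F" and "real (card F) * (16 * DIM('a) * ln n / n) \<le> 4 * (8 * real DIM('a)) ^ DIM('a)"
    using \<open>1 \<le> d\<close> \<open>2 \<le> n\<close> by (simp_all add: T_def d_def field_simps)
qed

section \<open>Hitting probabilities\<close>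

lemma emeasure_density_ge_const:
  fixes f :: "'a \<Rightarrow> real"
  assumes "f \<in> borel_measurable M" and "A \<in> sets M" and "\<And>z. z \<in> A \<Longrightarrow> c \<le> f z"
  shows "ennreal c * emeasure M A \<le> emeasure (density M f) A"
proof -
  have "ennreal c * emeasure M A = (\<integral>\<^sup>+ z. ennreal c * indicator A z \<partial>M)"
    using assms(2) by (rule nn_integral_cmult_indicator[symmetric])
  also have "\<dots> \<le> (\<integral>\<^sup>+ z. ennreal (f z) * indicator A z \<partial>M)"
    using assms(3) by (intro nn_integral_mono) (auto split: split_indicator intro: ennreal_leI)
  also have "\<dots> = emeasure (density M f) A"
    using assms(2) by (intro emeasure_density[symmetric] measurable_compose[OF assms(1) measurable_ennreal])
  finally show ?thesis .
qed

lemma superlevel_ball_mass: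
  fixes f :: "'a::euclidean_space \<Rightarrow> real" and lam :: real and n :: nat and y :: 'a
  defines "t \<equiv> (1 - 1 / (4 * real DIM('a))) * (rnld TYPE('a) n (2 * lam) / 2)"
  assumes "f \<in> borel_measurable borel" and "0 < lam" and "2 \<le> n"
    and above: "\<And>z. z \<in> ball y t \<Longrightarrow> lam \<le> f z"
  shows "ennreal (6 * DIM('a) * ln n / n) \<le> emeasure (density lborel f) (ball y t)"
proof -
  define d where "d = DIM('a)"
  define r where "r = rnld TYPE('a) n (2 * lam) / 2"
  define c where "c = 1 - 1 / (4 * real d)"
  have "1 \<le> d" by (simp add: d_def DIM_positive Suc_le_eq)
  then have "0 \<le> c" by (simp add: c_def)
  have "0 < r"
    using rnld_pos[of "2 * lam" n] assms(3,4) by (simp add: r_def)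
  have "1 + real d * (- (1 / (4 * real d))) \<le> (1 + (- (1 / (4 * real d)))) ^ d"
    by (rule Bernoulli_inequality) (use \<open>1 \<le> d\<close> in \<open>simp add: field_simps\<close>)
  then have "3 / 4 \<le> c ^ d"
    using \<open>1 \<le> d\<close> by (simp add: c_def)
  have "0 \<le> ln n" using assms(4) by simp
  have "t = c * r" by (simp add: t_def c_def r_def d_def)
  then have ball: "measure lborel (ball y t) = Defs.unit_ball_vol TYPE('a) * (c ^ d * r ^ d)"
    using measure_lborel_ball[of t y] \<open>0 \<le> c\<close> \<open>0 < r\<close> by (simp add: d_def power_mult_distrib)
  have "6 * d * ln n / n = 3 / 4 * (8 * d * ln n / n)"
    by simp
  also have "\<dots> \<le> c ^ d * (8 * d * ln n / n)"
    using \<open>3 / 4 \<le> c ^ d\<close> \<open>0 \<le> ln n\<close> by (intro mult_right_mono) auto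
  also have "8 * d * ln n / n = lam * Defs.unit_ball_vol TYPE('a) * r ^ d"
    using rnld_pow[of "2 * lam" n, where 'a = 'a] assms(3,4) by (simp add: r_def d_def)
  also have "c ^ d * (lam * Defs.unit_ball_vol TYPE('a) * r ^ d) = lam * measure lborel (ball y t)"
    by (simp add: ball mult_ac)
  finally have "ennreal (6 * d * ln n / n) \<le> ennreal (lam * measure lborel (ball y t))"
    by (rule ennreal_leI)
  also have "\<dots> = ennreal lam * emeasure lborel (ball y t)"
    using emeasure_lborel_ball_finite[of y t] \<open>0 < lam\<close>
    by (simp add: emeasure_eq_ennreal_measure ennreal_mult)
  also have "\<dots> \<le> emeasure (density lborel f) (ball y t)"
    using above assms(2) by (intro emeasure_density_ge_const) auto
  finally show ?thesis by (simp add: d_def)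
qed

lemma
  assumes "prob_space M" and "B \<in> sets M"
  shows sets_PiM_avoid:
      "{X \<in> space (PiM {..<n} (\<lambda>_. M)). \<forall>i<n. X i \<notin> B} \<in> sets (PiM {..<n} (\<lambda>_. M))"
    and measure_PiM_avoid:
      "measure (PiM {..<n} (\<lambda>_. M)) {X \<in> space (PiM {..<n} (\<lambda>_. M)). \<forall>i<n. X i \<notin> B}
         = (1 - measure M B) ^ n"
proof -
  interpret M: prob_space M by fact
  interpret product_prob_space "\<lambda>_::nat. M"
    by (simp add: product_prob_space_def product_prob_space_axioms_def product_sigma_finite_def
        M.prob_space_axioms prob_space_imp_sigma_finite)
  have avoid: "{X \<in> space (PiM {..<n} (\<lambda>_. M)). \<forall>i<n. X i \<notin> B} = PiE {..<n} (\<lambda>_. space M - B)"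
    by (auto simp: space_PiM PiE_def Pi_def)
  show "{X \<in> space (PiM {..<n} (\<lambda>_. M)). \<forall>i<n. X i \<notin> B} \<in> sets (PiM {..<n} (\<lambda>_. M))"
    unfolding avoid using assms(2) by (intro sets_PiM_I_finite) auto
  have "emeasure (PiM {..<n} (\<lambda>_. M)) (PiE {..<n} (\<lambda>_. space M - B))
      = (\<Prod>i<n. emeasure M (space M - B))"
    using assms(2) by (intro emeasure_PiM) auto
  also have "\<dots> = ennreal ((1 - measure M B) ^ n)"
    using assms(2) by (simp add: M.emeasure_eq_measure M.prob_compl prod_ennreal ennreal_power)
  finally show "measure (PiM {..<n} (\<lambda>_. M)) {X \<in> space (PiM {..<n} (\<lambda>_. M)). \<forall>i<n. X i \<notin> B}
      = (1 - measure M B) ^ n"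
    unfolding avoid by (rule measure_eq_emeasure_eq_ennreal[rotated]) (simp add: M.prob_le_1)
qed

lemma exists_event_hitting_all:
  assumes M: "prob_space M" and "finite F"
    and B: "\<And>p. p \<in> F \<Longrightarrow> B p \<in> sets M"
    and q: "\<And>p. p \<in> F \<Longrightarrow> q \<le> measure M (B p)"
  shows "\<exists>E\<in>sets (PiM {..<n} (\<lambda>_. M)).
           E \<subseteq> {X \<in> space (PiM {..<n} (\<lambda>_. M)). \<forall>p\<in>F. \<exists>i<n. X i \<in> B p} \<and>
           1 - real (card F) * (1 - q) ^ n \<le> measure (PiM {..<n} (\<lambda>_. M)) E"
proof -
  define P where "P = PiM {..<n} (\<lambda>_. M)"
  define Miss where "Miss p = {X \<in> space P. \<forall>i<n. X i \<notin> B p}" for p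
  interpret M: prob_space M by fact
  interpret P: prob_space P unfolding P_def by (intro prob_space_PiM M)
  have Miss_sets: "Miss p \<in> sets P" if "p \<in> F" for p
    unfolding Miss_def P_def using M B[OF that] by (rule sets_PiM_avoid)
  have "measure P (Miss p) \<le> (1 - q) ^ n" if "p \<in> F" for p
  proof -
    have "measure P (Miss p) = (1 - measure M (B p)) ^ n"
      unfolding Miss_def P_def using M B[OF that] by (rule measure_PiM_avoid)
    also have "\<dots> \<le> (1 - q) ^ n"
      using q[OF that] M.prob_le_1 by (intro power_mono) auto
    finally show ?thesis .
  qed
  then have "measure P (\<Union>p\<in>F. Miss p) \<le> real (card F) * (1 - q) ^ n"
    using P.finite_measure_subadditive_finite[OF \<open>finite F\<close>, of Miss] Miss_sets
      sum_bounded_above[of F "\<lambda>p. measure P (Miss p)"] by fastforce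
  moreover have "measure P (space P - (\<Union>p\<in>F. Miss p)) = 1 - measure P (\<Union>p\<in>F. Miss p)"
    using Miss_sets \<open>finite F\<close> by (intro P.prob_compl sets.finite_UN) auto
  moreover have "space P - (\<Union>p\<in>F. Miss p) \<in> sets P"
    using Miss_sets \<open>finite F\<close> by (intro sets.Diff sets.top sets.finite_UN) auto
  moreover have "space P - (\<Union>p\<in>F. Miss p) \<subseteq> {X \<in> space P. \<forall>p\<in>F. \<exists>i<n. X i \<in> B p}"
    by (auto simp: Miss_def)
  ultimately have "\<exists>E\<in>sets P. E \<subseteq> {X \<in> space P. \<forall>p\<in>F. \<exists>i<n. X i \<in> B p} \<and>
      1 - real (card F) * (1 - q) ^ n \<le> measure P E"
    by (intro bexI[of _ "space P - (\<Union>p\<in>F. Miss p)"]) auto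
  then show ?thesis unfolding P_def .
qed

lemma one_minus_power_le:
  fixes q :: real
  assumes "0 \<le> q" and "q \<le> 1" and "0 < n" and "real a * ln n \<le> n * q"
  shows "(1 - q) ^ n \<le> 1 / real n ^ a"
proof -
  have "(1 - q) ^ n \<le> exp (- q) ^ n"
    using assms(2) exp_ge_add_one_self[of "- q"] by (intro power_mono) auto
  also have "\<dots> = exp (- (n * q))"
    by (simp add: exp_of_nat_mult[symmetric])
  also have "\<dots> \<le> exp (- (a * ln n))"
    using assms(4) by simp
  also have "\<dots> = 1 / real n ^ a"
    using assms(3) by (simp add: exp_minus exp_of_nat_mult inverse_eq_divide)
  finally show ?thesis .
qed

lemma union_bound_le_inverse:
  fixes N :: real and d n :: nat
  assumes "1 \<le> d" and "16 \<le> n" and "0 \<le> N"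
    and q: "6 * d * ln n / n \<le> 1"
    and N: "N * (16 * d * ln n / n) \<le> 4 * (8 * real d) ^ d"
  shows "N * (1 - 6 * d * ln n / n) ^ n \<le> 1 / n"
proof -
  have "exp 1 \<le> real n" using exp_le \<open>16 \<le> n\<close> by linarith
  then have "1 \<le> ln n" using \<open>16 \<le> n\<close> by (subst ln_ge_iff) auto
  have "d \<le> d * ln n"
    using mult_left_mono[OF \<open>1 \<le> ln n\<close>, of "real d"] by simp
  moreover have "6 * d * ln n \<le> n"
    using q \<open>16 \<le> n\<close> by (simp add: pos_divide_le_eq)
  ultimately have "real d \<le> n" using \<open>1 \<le> ln n\<close> by linarith
  then have "8 * real d \<le> real n * real n"
    using mult_mono[of 8 "real n" "real d" "real n"] \<open>16 \<le> n\<close> by simp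
  have "N \<le> N * (4 * d * ln n)"
    using mult_left_mono[of 1 "4 * d * ln n" N] \<open>0 \<le> N\<close> \<open>d \<le> d * ln n\<close> \<open>1 \<le> d\<close> by simp
  also have "\<dots> = N * (16 * d * ln n / n) * n / 4"
    using \<open>16 \<le> n\<close> by simp
  also have "\<dots> \<le> 4 * (8 * real d) ^ d * n / 4"
    by (intro divide_right_mono mult_right_mono N) auto
  also have "\<dots> = (8 * real d) ^ d * n"
    by simp
  also have "\<dots> \<le> (real n * real n) ^ d * n"
    using \<open>8 * real d \<le> real n * real n\<close> by (intro mult_right_mono power_mono) auto
  also have "\<dots> = real n ^ (2 * d + 1)"
    by (simp add: power_add power_mult power2_eq_square)
  also have "\<dots> \<le> real n ^ (6 * d - 1)"
    using \<open>1 \<le> d\<close> \<open>16 \<le> n\<close> by (intro power_increasing) auto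
  finally have "N \<le> real n ^ (6 * d - 1)" .
  moreover have "(1 - 6 * d * ln n / n) ^ n \<le> 1 / real n ^ (6 * d)"
    using q \<open>1 \<le> ln n\<close> \<open>16 \<le> n\<close> by (intro one_minus_power_le) auto
  ultimately have "N * (1 - 6 * d * ln n / n) ^ n \<le> real n ^ (6 * d - 1) * (1 / real n ^ (6 * d))"
    using q by (intro mult_mono) auto
  also have "real n ^ (6 * d) = real n ^ (6 * d - 1) * n"
    using \<open>1 \<le> d\<close> power_Suc2[of "real n" "6 * d - 1"] by simp
  finally show ?thesis
    using \<open>16 \<le> n\<close> by simp
qed

lemma sample_hits_superlevel_balls:
  fixes f :: "'a::euclidean_space \<Rightarrow> real"
  assumes nonneg: "\<And>x. 0 \<le> f x" and dens: "(\<integral>\<^sup>+ x. ennreal (f x) \<partial>lborel) = 1"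
    and meas: "f \<in> borel_measurable borel" and "16 \<le> n"
  shows "\<exists>E\<in>sets (PiM {..<n} (\<lambda>_. density lborel f)).
           E \<subseteq> {X \<in> space (PiM {..<n} (\<lambda>_. density lborel f)).
                  \<forall>lam \<rho> x. 0 < lam \<longrightarrow> rnld TYPE('a) n lam / 2 \<le> \<rho> \<longrightarrow>
                    (\<forall>z\<in>ball x \<rho>. lam \<le> f z) \<longrightarrow> (\<exists>i<n. X i \<in> ball x \<rho>)} \<and>
           1 - 1 / n \<le> measure (PiM {..<n} (\<lambda>_. density lborel f)) E"
proof -
  define d where "d = DIM('a)"
  define q where "q = 6 * d * ln n / n"
  define r where "r = level_radius TYPE('a) n"
  define s where "s k = r k / (4 * real d)" for k
  define t where "t k = (1 - 1 / (4 * real d)) * r k" for k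
  have "1 \<le> d" by (simp add: d_def DIM_positive Suc_le_eq)
  have "0 < r k" for k
    using rnld_pos[of "2 * 2 powr k" n] \<open>16 \<le> n\<close> by (simp add: r_def level_radius_def)
  then have "0 < s k" and "s k + t k = r k" for k
    using \<open>1 \<le> d\<close> by (auto simp: s_def t_def field_simps)
  have "\<forall>k. \<exists>S::'a set. pairwise (\<lambda>y y'. s k \<le> dist y y') S \<and> (\<forall>x. \<exists>y\<in>S. dist x y < s k)"
    by (metis exists_separated_net \<open>\<And>k. 0 < s k\<close>)
  then obtain S :: "int \<Rightarrow> 'a set" where sep: "\<And>k. pairwise (\<lambda>y y'. s k \<le> dist y y') (S k)"
    and cover: "\<And>k x. \<exists>y\<in>S k. dist x y < s k"
    by metis
  define F :: "(int \<times> 'a) set"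
    where "F = {(k, y). y \<in> S k \<and> (\<forall>z\<in>ball y (t k). 2 powr real_of_int k \<le> f z)}"
  have "finite F" and F_card: "real (card F) * (16 * d * ln n / n) \<le> 4 * (8 * real d) ^ d"
    using dyadic_superlevel_net_count[OF nonneg dens[THEN eq_refl], of n S] sep \<open>16 \<le> n\<close>
    by (simp_all add: F_def t_def s_def r_def d_def)
  interpret M: prob_space "density lborel f"
    using dens meas by (intro prob_spaceI) (simp add: emeasure_density)
  have mass: "q \<le> measure (density lborel f) (ball y (t k))" if "(k, y) \<in> F" for k y
  proof -
    have "ennreal q \<le> emeasure (density lborel f) (ball y (t k))"
      using superlevel_ball_mass[OF meas, of "2 powr k" n y] that \<open>16 \<le> n\<close>
      by (simp add: F_def q_def t_def r_def level_radius_def d_def)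
    then show ?thesis by (simp add: M.emeasure_eq_measure)
  qed
  obtain E where "E \<in> sets (PiM {..<n} (\<lambda>_. density lborel f))"
    and E_hits: "E \<subseteq> {X \<in> space (PiM {..<n} (\<lambda>_. density lborel f)).
                   \<forall>(k, y)\<in>F. \<exists>i<n. X i \<in> ball y (t k)}"
    and E_prob: "1 - real (card F) * (1 - q) ^ n \<le> measure (PiM {..<n} (\<lambda>_. density lborel f)) E"
    using exists_event_hitting_all[OF M.prob_space_axioms \<open>finite F\<close>, of "\<lambda>(k, y). ball y (t k)" q n]
      mass by (auto simp: split_beta)
  have "real (card F) * (1 - q) ^ n \<le> 1 / n"
  proof (cases "F = {}")
    case False
    then obtain k y where "(k, y) \<in> F" by auto
    then have "q \<le> 1" using mass M.prob_le_1 order_trans by blast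
    then show ?thesis
      unfolding q_def using F_card \<open>1 \<le> d\<close> \<open>16 \<le> n\<close> by (intro union_bound_le_inverse) auto
  qed simp
  moreover have "\<exists>i<n. X i \<in> ball x \<rho>"
    if "X \<in> E" "0 < lam" "rnld TYPE('a) n lam / 2 \<le> \<rho>" "\<forall>z\<in>ball x \<rho>. lam \<le> f z" for X lam \<rho> x
  proof (rule dyadic_net_hits_ball[OF cover])
    show "s k + t k \<le> r k" for k by (simp add: \<open>\<And>k. s k + t k = r k\<close>)
    show "\<exists>i<n. X i \<in> ball y (t k)" if "y \<in> S k" "\<forall>z\<in>ball y (t k). 2 powr k \<le> f z" for k y
      using that E_hits \<open>X \<in> E\<close> by (auto simp: F_def)
    show "r k \<le> \<rho>" if "lam < 2 powr real_of_int (k + 1)" for k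
      using rnld_antimono[of lam "2 * 2 powr k" n, where 'a = 'a] that \<open>0 < lam\<close> \<open>16 \<le> n\<close>
        \<open>rnld TYPE('a) n lam / 2 \<le> \<rho>\<close>
      by (simp add: r_def level_radius_def powr_add)
  qed (use that in auto)
  ultimately show ?thesis
    using \<open>E \<in> sets _\<close> E_hits E_prob by (intro bexI[of _ E]) auto
qed

theorem lemmaS3:
  fixes f0 :: "'a::euclidean_space \<Rightarrow> real" and n :: nat
  assumes nonneg: "\<And>x. f0 x \<ge> 0"
    and dens: "(\<integral>\<^sup>+ x. ennreal (f0 x) \<partial>lborel) = 1"
    and unif: "uniformly_continuous_on UNIV f0"
    and n16: "n \<ge> 16"
  shows "(\<forall>\<eta>>0. modh f0 \<eta> > 0) \<and>
    (\<exists>E \<in> sets (PiM {..<n} (\<lambda>_. density lborel f0)).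
       E \<subseteq> {X \<in> space (PiM {..<n} (\<lambda>_. density lborel f0)).
              \<forall>(f::'a \<Rightarrow> real) \<eta> lam \<delta>. \<eta> > 0 \<longrightarrow> lam > 0 \<longrightarrow>
                 rnld TYPE('a) n lam \<le> \<delta> \<longrightarrow> ereal \<delta> \<le> 2 * modh f0 \<eta> \<longrightarrow>
                 superlevel f0 (ereal lam + supdist f0 f + ereal \<eta>) \<subseteq> Shat n X \<delta> lam f \<and>
                 Shat n X \<delta> lam f \<subseteq> superlevel f0 (ereal lam - supdist f0 f - ereal \<eta>)}
     \<and> measure (PiM {..<n} (\<lambda>_. density lborel f0)) E \<ge> 1 - 1 / real n)"
proof -
  let ?P = "PiM {..<n} (\<lambda>_. density lborel f0)"
  have "f0 \<in> borel_measurable borel"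
    using unif by (intro borel_measurable_continuous_onI uniformly_continuous_imp_continuous)
  then obtain E where E: "E \<in> sets ?P" "1 - 1 / n \<le> measure ?P E"
    and hits: "E \<subseteq> {X \<in> space ?P. \<forall>lam \<rho> x. 0 < lam \<longrightarrow> rnld TYPE('a) n lam / 2 \<le> \<rho> \<longrightarrow>
                    (\<forall>z\<in>ball x \<rho>. lam \<le> f0 z) \<longrightarrow> (\<exists>i<n. X i \<in> ball x \<rho>)}"
    using sample_hits_superlevel_balls[OF nonneg dens _ n16] by blast
  have "superlevel f0 (ereal lam + supdist f0 f + ereal \<eta>) \<subseteq> Shat n X \<delta> lam f \<and>
      Shat n X \<delta> lam f \<subseteq> superlevel f0 (ereal lam - supdist f0 f - ereal \<eta>)"
    if "X \<in> E" "0 < lam" "rnld TYPE('a) n lam \<le> \<delta>" "ereal \<delta> \<le> 2 * modh f0 \<eta>" for X f \<eta> lam \<delta>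
    using that(2-) hits \<open>X \<in> E\<close> by (intro superlevel_Shat_sandwich) blast+
  then show ?thesis
    using E hits modh_gt_0[OF unif] by (intro conjI bexI[of _ E]) blast+
qed

end
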